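(* Let $\boldsymbol k$ be an algebraically closed field with $\operatorname{char}\boldsymbol k\neq 2$, let $V$ be a vector space over $\boldsymbol k$ of finite dimension $n$, let $\mathcal C\subseteq V^*\otimes V^*\otimes V$ be the subspace of tensors fixed by the involution $\ell\otimes\ell'\otimes v\mapsto\ell'\otimes\ell\otimes v$, and let $G:=\mathrm{GL}(V)$ act on the projectivization $P\mathcal C$ of $\mathcal C$ via its natural linear action on $\mathcal C$. Then there is a dense open subset of $P\mathcal C$ such that for every point in it, its stabilizer in $G$ coincides with the center of $G$. *)

theory Defs
  imports "HOL-Computational_Algebra.Polynomial"
begin

definition algebraically_closed :: "'k::field itself \<Rightarrow> bool" where
  "algebraically_closed _ \<longleftrightarrow> (\<forall>p::'k poly. degree p > 0 \<longrightarrow> (\<exists>x. poly p x = 0))"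

text \<open>V = 'k^'n with standard basis e_i (indexed by the finite type 'n).
  Linear maps are matrices g :: 'n => 'n => 'k, with g e_j = sum_i g i j e_i.\<close>

type_synonym ('n, 'k) mat = "'n \<Rightarrow> 'n \<Rightarrow> 'k"

definition mat_mul :: "('n::finite, 'k::field) mat \<Rightarrow> ('n, 'k) mat \<Rightarrow> ('n, 'k) mat" where
  "mat_mul g h = (\<lambda>i j. \<Sum>m\<in>UNIV. g i m * h m j)"

definition id_mat :: "('n::finite, 'k::field) mat" where
  "id_mat = (\<lambda>i j. if i = j then 1 else 0)"

definition GL :: "('n::finite, 'k::field) mat set" where
  "GL = {g. \<exists>h. mat_mul g h = id_mat \<and> mat_mul h g = id_mat}"

definition mat_inv :: "('n::finite, 'k::field) mat \<Rightarrow> ('n, 'k) mat" where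
  "mat_inv g = (THE h. mat_mul g h = id_mat \<and> mat_mul h g = id_mat)"

definition center_GL :: "('n::finite, 'k::field) mat set" where
  "center_GL = {g \<in> GL. \<forall>h \<in> GL. mat_mul g h = mat_mul h g}"

text \<open>Tensors in V* (x) V* (x) V, in coordinates:
  t i j l is the coefficient of e_i^* (x) e_j^* (x) e_l.\<close>
type_synonym ('n, 'k) tensor = "'n \<Rightarrow> 'n \<Rightarrow> 'n \<Rightarrow> 'k"

definition symC :: "('n, 'k) tensor set" where
  "symC = {t. \<forall>i j l. t i j l = t j i l}"

text \<open>Natural GL(V)-action on V* (x) V* (x) V:
  g . (l (x) l' (x) v) = (l o g^-1) (x) (l' o g^-1) (x) (g v).\<close>
definition act :: "('n::finite, 'k::field) mat \<Rightarrow> ('n, 'k) tensor \<Rightarrow> ('n, 'k) tensor" where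
  "act g t = (let h = mat_inv g in
     (\<lambda>i j l. \<Sum>a\<in>UNIV. \<Sum>b\<in>UNIV. \<Sum>m\<in>UNIV. h a i * h b j * t a b m * g l m))"

definition proj_stabilizer :: "('n::finite, 'k::field) tensor \<Rightarrow> ('n, 'k) mat set" where
  "proj_stabilizer t = {g \<in> GL. \<exists>c. c \<noteq> 0 \<and> act g t = (\<lambda>i j l. c * t i j l)}"

inductive poly_fun :: "(('n, 'k::comm_ring_1) tensor \<Rightarrow> 'k) \<Rightarrow> bool" where
  const: "poly_fun (\<lambda>_. a)"
| coord: "poly_fun (\<lambda>t. t i j l)"
| add: "poly_fun f \<Longrightarrow> poly_fun g \<Longrightarrow> poly_fun (\<lambda>t. f t + g t)"
| mult: "poly_fun f \<Longrightarrow> poly_fun g \<Longrightarrow> poly_fun (\<lambda>t. f t * g t)"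

text \<open>Zariski topology on PC, described via cones: a subset of PC is identified
  with its preimage in C - {0} (a set of nonzero tensors stable under nonzero scaling).
  PC carries the quotient topology of the Zariski topology on C - {0}, so
  an open set of PC is a scaling-stable subset of C - {0} that is the
  complement (in C - {0}) of the common zero set of a family of polynomial functions.\<close>
definition proj_cone :: "('n, 'k::field) tensor set \<Rightarrow> bool" where
  "proj_cone W \<longleftrightarrow> W \<subseteq> symC - {(\<lambda>i j l. 0)} \<and>
     (\<forall>t\<in>W. \<forall>c. c \<noteq> 0 \<longrightarrow> (\<lambda>i j l. c * t i j l) \<in> W)"

definition proj_open :: "('n, 'k::field) tensor set \<Rightarrow> bool" where
  "proj_open W \<longleftrightarrow> proj_cone W \<and>
     (\<exists>S. (\<forall>f\<in>S. poly_fun f) \<and> W = {t \<in> symC - {(\<lambda>i j l. 0)}. \<exists>f\<in>S. f t \<noteq> 0})"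

definition proj_dense :: "('n, 'k::field) tensor set \<Rightarrow> bool" where
  "proj_dense W \<longleftrightarrow> (\<forall>U. proj_open U \<and> U \<noteq> {} \<longrightarrow> W \<inter> U \<noteq> {})"

end

theory Submission
  imports Defs "HOL-Analysis.Determinants" "HOL-Computational_Algebra.Formal_Power_Series"
begin

(* A tensor t in C is the structure tensor of a commutative algebra on V, with product
   (x y)_l = sum_(i,j) x_i y_j t_ijl. If g in GL(V) maps t to c t, then c g is an automorphism
   of this algebra. Automorphisms preserve the trace form x |-> tr(L_x) and the trace pairing
   (x, y) |-> tr(L_(x y)); when the pairing is nondegenerate, the vector u representing the trace
   form through it is therefore fixed, and so are its powers u, u^2, u^3, ... If these powers
   span V, then c g = 1, i.e. g is central. Both conditions together are the nonvanishing of one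
   polynomial in the coordinates of t (u is replaced by det(pairing) u via Cramer's rule), and an
   explicit algebra shows this polynomial is not identically zero. Over an infinite field, the
   points [t] of PC at which it does not vanish form a dense open subset. *)

section \<open>Scalar matrices and the centre of GL(V)\<close>

definition matrix_of :: "('n::finite, 'k::field) mat \<Rightarrow> 'k^'n^'n" where
  "matrix_of g = (\<chi> i j. g i j)"

lemma matrix_of_mat_mul: "matrix_of (mat_mul g h) = matrix_of g ** matrix_of h"
  by (simp add: matrix_of_def mat_mul_def matrix_matrix_mult_def)

lemma matrix_of_id_mat: "matrix_of (id_mat :: ('n::finite, 'k::field) mat) = mat 1"
  by (simp add: matrix_of_def id_mat_def mat_def vec_eq_iff)

lemma matrix_of_inject: "matrix_of g = matrix_of h \<longleftrightarrow> g = h"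
  by (auto simp: matrix_of_def vec_eq_iff fun_eq_iff)

lemma mat_inv_eqI:
  fixes g h :: "('n::finite, 'k::field) mat"
  assumes gh: "mat_mul g h = id_mat" and hg: "mat_mul h g = id_mat"
  shows "mat_inv g = h"
  unfolding mat_inv_def
proof (rule the_equality)
  fix h' assume "mat_mul g h' = id_mat \<and> mat_mul h' g = id_mat"
  then have "matrix_of h' = (matrix_of h ** matrix_of g) ** matrix_of h'"
    using hg by (simp add: matrix_of_mat_mul[symmetric] matrix_of_id_mat)
  also have "\<dots> = matrix_of h ** (matrix_of g ** matrix_of h')"
    by (rule matrix_mul_assoc[symmetric])
  also have "\<dots> = matrix_of h"
    using \<open>mat_mul g h' = id_mat \<and> _\<close> by (simp add: matrix_of_mat_mul[symmetric] matrix_of_id_mat)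
  finally show "h' = h" by (simp add: matrix_of_inject)
qed (use gh hg in simp)

lemma mat_inv_GL:
  assumes "g \<in> (GL :: ('n::finite, 'k::field) mat set)"
  shows "mat_mul g (mat_inv g) = id_mat" and "mat_mul (mat_inv g) g = id_mat"
  using assms mat_inv_eqI by (auto simp: GL_def)

definition scalar_mat :: "'k \<Rightarrow> ('n::finite, 'k::field) mat" where
  "scalar_mat c = (\<lambda>i j. if i = j then c else 0)"

lemma scalar_mat_mat_mul: "mat_mul (scalar_mat c) h = (\<lambda>i j. c * h i j)"
  by (simp add: mat_mul_def scalar_mat_def mult_delta_left)

lemma mat_mul_scalar_mat: "mat_mul h (scalar_mat c) = (\<lambda>i j. c * h i j)"
  by (simp add: mat_mul_def scalar_mat_def mult_delta_right mult.commute)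

lemma scalar_mat_mult_inverse:
  fixes c :: "'k::field"
  assumes "c \<noteq> 0"
  shows "mat_mul (scalar_mat c) (scalar_mat (inverse c)) = (id_mat :: ('n::finite, 'k) mat)"
    and "mat_mul (scalar_mat (inverse c)) (scalar_mat c) = (id_mat :: ('n::finite, 'k) mat)"
  using assms unfolding scalar_mat_mat_mul by (simp_all add: scalar_mat_def id_mat_def fun_eq_iff)

lemma scalar_mat_GL: "c \<noteq> 0 \<Longrightarrow> (scalar_mat c :: ('n::finite, 'k::field) mat) \<in> GL"
  unfolding GL_def using scalar_mat_mult_inverse by blast

lemma mat_inv_scalar_mat:
  "c \<noteq> 0 \<Longrightarrow> mat_inv (scalar_mat c :: ('n::finite, 'k::field) mat) = scalar_mat (inverse c)"
  by (intro mat_inv_eqI scalar_mat_mult_inverse)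

lemma act_scalar_mat:
  assumes "c \<noteq> 0"
  shows "act (scalar_mat c :: ('n::finite, 'k::field) mat) t = (\<lambda>i j l. inverse c * t i j l)"
  unfolding act_def Let_def mat_inv_scalar_mat[OF assms]
  using assms by (simp add: scalar_mat_def mult_delta_left mult_delta_right fun_eq_iff)

definition transvection :: "'n \<Rightarrow> 'n \<Rightarrow> 'k \<Rightarrow> ('n::finite, 'k::field) mat" where
  "transvection i j x = (\<lambda>a b. id_mat a b + (if a = i \<and> b = j then x else 0))"

lemma mat_mul_transvection:
  "mat_mul g (transvection i j x) a b = g a b + (if b = j then g a i * x else 0)"
  by (simp add: mat_mul_def transvection_def id_mat_def distrib_left sum.distrib mult_delta_right)

lemma transvection_mat_mul:
  "mat_mul (transvection i j x) g a b = g a b + (if a = i then x * g j b else 0)"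
  by (simp add: mat_mul_def transvection_def id_mat_def distrib_right sum.distrib mult_delta_left)

lemma transvection_GL: "i \<noteq> j \<Longrightarrow> transvection i j x \<in> GL"
  unfolding GL_def
  by (rule CollectI, rule exI[of _ "transvection i j (-x)"])
    (auto simp only: fun_eq_iff mat_mul_transvection transvection_mat_mul,
     auto simp: transvection_def id_mat_def)

lemma center_GL_eq: "center_GL = {scalar_mat c :: ('n::finite, 'k::field) mat | c. c \<noteq> 0}"
proof (intro equalityI subsetI)
  fix g :: "('n, 'k) mat" assume g: "g \<in> center_GL"
  have key: "(if b = j then g a i else 0) = (if a = i then g j b else 0)" if "i \<noteq> j" for i j a b
  proof -
    have "mat_mul g (transvection i j 1) = mat_mul (transvection i j 1) g"
      using g transvection_GL[OF that] by (auto simp: center_GL_def)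
    then have "mat_mul g (transvection i j 1) a b = mat_mul (transvection i j 1) g a b"
      by simp
    then show ?thesis
      by (simp only: mat_mul_transvection transvection_mat_mul mult_1_left mult_1_right add_left_cancel)
  qed
  have off_diagonal: "g a b = 0" if "a \<noteq> b" for a b
    using key[of b a a a] that by simp
  fix i0 :: 'n
  have diagonal: "g a a = g i0 i0" for a
    using key[where i=a and j=i0 and a=a and b=i0] by (cases "a = i0") simp_all
  have g_eq: "g = scalar_mat (g i0 i0)"
    using off_diagonal diagonal by (auto simp: scalar_mat_def fun_eq_iff)
  moreover have "g i0 i0 \<noteq> 0"
  proof
    assume "g i0 i0 = 0"
    then have "g = scalar_mat 0" using g_eq by simp
    moreover obtain h where "mat_mul g h = id_mat" using g by (auto simp: center_GL_def GL_def)
    ultimately have "(\<lambda>i j. 0 * h i j) = id_mat" by (simp only: scalar_mat_mat_mul)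
    then show False by (metis id_mat_def mult_zero_left zero_neq_one)
  qed
  ultimately show "g \<in> {scalar_mat c | c. c \<noteq> 0}" by blast
next
  fix g :: "('n, 'k) mat" assume "g \<in> {scalar_mat c | c. c \<noteq> 0}"
  then show "g \<in> center_GL"
    by (auto simp: center_GL_def scalar_mat_GL scalar_mat_mat_mul mat_mul_scalar_mat)
qed

section \<open>The trace forms of the algebra of a tensor\<close>

text \<open>\<open>mult_matrix t x *v y\<close> is the product \<open>x y\<close> in the algebra with structure tensor
  \<open>t\<close>; the left multiplication \<open>L\<^sub>x\<close> is \<open>mult_matrix t x\<close>.\<close>
definition mult_matrix :: "('n::finite, 'k::field) tensor \<Rightarrow> 'k^'n \<Rightarrow> 'k^'n^'n" where
  "mult_matrix t x = (\<chi> l j. \<Sum>i\<in>UNIV. x$i * t i j l)"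

definition trace_vec :: "('n::finite, 'k::field) tensor \<Rightarrow> 'k^'n" where
  "trace_vec t = (\<chi> i. \<Sum>a\<in>UNIV. t i a a)"

definition trace_form :: "('n::finite, 'k::field) tensor \<Rightarrow> 'k^'n \<Rightarrow> 'k" where
  "trace_form t x = (\<Sum>i\<in>UNIV. trace_vec t $ i * x $ i)"

definition trace_pairing :: "('n::finite, 'k::field) tensor \<Rightarrow> 'k^'n \<Rightarrow> 'k^'n \<Rightarrow> 'k" where
  "trace_pairing t x y = trace_form t (mult_matrix t x *v y)"

definition trace_pairing_matrix :: "('n::finite, 'k::field) tensor \<Rightarrow> 'k^'n^'n" where
  "trace_pairing_matrix t = (\<chi> i j. \<Sum>l\<in>UNIV. trace_vec t $ l * t i j l)"

text \<open>By Cramer's rule this is \<open>det B *s u\<close> for the solution \<open>u\<close> of \<open>B *v u = trace_vec t\<close>,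
  \<open>B = trace_pairing_matrix t\<close>, but unlike \<open>u\<close> it is polynomial in \<open>t\<close>.\<close>
definition trace_dual :: "('n::finite, 'k::field) tensor \<Rightarrow> 'k^'n" where
  "trace_dual t = (\<chi> k. det (\<chi> i j. if j = k then trace_vec t $ i else trace_pairing_matrix t $ i $ j))"

primrec trace_dual_power :: "('n::finite, 'k::field) tensor \<Rightarrow> nat \<Rightarrow> 'k^'n" where
  "trace_dual_power t 0 = trace_dual t"
| "trace_dual_power t (Suc s) = mult_matrix t (trace_dual t) *v trace_dual_power t s"

definition power_matrix :: "('n::finite \<Rightarrow> nat) \<Rightarrow> ('n, 'k::field) tensor \<Rightarrow> 'k^'n^'n" where
  "power_matrix pos t = (\<chi> l j. trace_dual_power t (pos j) $ l)"

definition genericity_poly :: "('n::finite \<Rightarrow> nat) \<Rightarrow> ('n, 'k::field) tensor \<Rightarrow> 'k" where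
  "genericity_poly pos t = det (trace_pairing_matrix t) * det (power_matrix pos t)"

lemma trace_form_eq_trace: "trace_form t x = trace (mult_matrix t x)"
proof -
  have "trace (mult_matrix t x) = (\<Sum>l\<in>UNIV. \<Sum>i\<in>UNIV. x$i * t i l l)"
    by (simp add: trace_def mult_matrix_def)
  also have "\<dots> = (\<Sum>i\<in>UNIV. \<Sum>l\<in>UNIV. x$i * t i l l)" by (rule sum.swap)
  finally show ?thesis
    by (simp add: trace_form_def trace_vec_def sum_distrib_left sum_distrib_right mult_ac)
qed

lemma trace_pairing_eq: "trace_pairing t x y = (\<Sum>i\<in>UNIV. x$i * (trace_pairing_matrix t *v y)$i)"
proof -
  have "trace_pairing t x y = (\<Sum>l\<in>UNIV. \<Sum>j\<in>UNIV. \<Sum>i\<in>UNIV. trace_vec t $ l * (x$i * t i j l * y$j))"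
    by (simp add: trace_pairing_def trace_form_def mult_matrix_def matrix_vector_mult_def
        sum_distrib_left sum_distrib_right mult_ac)
  also have "\<dots> = (\<Sum>l\<in>UNIV. \<Sum>i\<in>UNIV. \<Sum>j\<in>UNIV. trace_vec t $ l * (x$i * t i j l * y$j))"
    by (rule sum.cong[OF refl], rule sum.swap)
  also have "\<dots> = (\<Sum>i\<in>UNIV. \<Sum>l\<in>UNIV. \<Sum>j\<in>UNIV. trace_vec t $ l * (x$i * t i j l * y$j))"
    by (rule sum.swap)
  also have "\<dots> = (\<Sum>i\<in>UNIV. \<Sum>j\<in>UNIV. \<Sum>l\<in>UNIV. trace_vec t $ l * (x$i * t i j l * y$j))"
    by (rule sum.cong[OF refl], rule sum.swap)
  also have "\<dots> = (\<Sum>i\<in>UNIV. x$i * (trace_pairing_matrix t *v y)$i)"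
    by (simp add: trace_pairing_matrix_def matrix_vector_mult_def
        sum_distrib_left sum_distrib_right mult_ac)
  finally show ?thesis .
qed

lemma trace_pairing_matrix_row: "(trace_pairing_matrix t *v y) $ i = trace_pairing t (axis i 1) y"
  by (simp add: trace_pairing_eq axis_def mult_delta_left)

lemma trace_form_axis: "trace_form t (axis i 1) = trace_vec t $ i"
  by (simp add: trace_form_def axis_def mult_delta_right)

lemma trace_dual_eq:
  assumes "trace_pairing_matrix t *v u = trace_vec t"
  shows "trace_dual t = det (trace_pairing_matrix t) *s u"
  using cramer_lemma[where A = "trace_pairing_matrix t" and x = u, unfolded assms]
  by (simp add: trace_dual_def vec_eq_iff mult.commute)

locale algebra_automorphism =
  fixes t :: "('n::finite, 'k::field) tensor" and K H :: "'k^'n^'n"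
  assumes mult_matrix_comm: "\<And>x. K ** mult_matrix t x = mult_matrix t (K *v x) ** K"
    and right_inverse: "K ** H = mat 1" and left_inverse: "H ** K = mat 1"
begin

lemma trace_form_invariant: "trace_form t (K *v x) = trace_form t x"
proof -
  have "trace (mult_matrix t (K *v x)) = trace (mult_matrix t (K *v x) ** (K ** H))"
    by (simp add: right_inverse)
  also have "\<dots> = trace (H ** (K ** mult_matrix t x))"
    by (simp add: mult_matrix_comm matrix_mul_assoc trace_mul_sym[of _ H])
  also have "\<dots> = trace (mult_matrix t x)"
    by (simp add: matrix_mul_assoc left_inverse)
  finally show ?thesis by (simp add: trace_form_eq_trace)
qed

lemma trace_pairing_invariant: "trace_pairing t (K *v x) (K *v y) = trace_pairing t x y"
proof -
  have "mult_matrix t (K *v x) *v (K *v y) = K *v (mult_matrix t x *v y)"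
    by (simp add: matrix_vector_mul_assoc mult_matrix_comm)
  then show ?thesis by (simp add: trace_pairing_def trace_form_invariant)
qed

text \<open>\<open>K\<close> preserves the trace form and the nondegenerate trace pairing, so it fixes the
  unique vector \<open>u\<close> representing the former through the latter.\<close>
lemma fixes_trace_pairing_solution:
  assumes u: "trace_pairing_matrix t *v u = trace_vec t"
    and nondegenerate: "det (trace_pairing_matrix t) \<noteq> 0"
  shows "K *v u = u"
proof -
  have "trace_pairing_matrix t *v (K *v u) = trace_vec t"
  proof (subst vec_eq_iff, intro allI)
    fix i
    define x where "x = H *v axis i 1"
    have Kx: "K *v x = axis i 1"
      by (simp add: x_def matrix_vector_mul_assoc right_inverse)
    have "(trace_pairing_matrix t *v (K *v u)) $ i = trace_pairing t (K *v x) (K *v u)"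
      by (simp add: trace_pairing_matrix_row Kx)
    also have "\<dots> = trace_form t x"
      by (simp only: trace_pairing_invariant) (simp add: trace_pairing_eq u trace_form_def mult.commute)
    also have "\<dots> = trace_vec t $ i"
      by (metis Kx trace_form_axis trace_form_invariant)
    finally show "(trace_pairing_matrix t *v (K *v u)) $ i = trace_vec t $ i" .
  qed
  moreover have "inj ((*v) (trace_pairing_matrix t))"
    by (simp add: inj_matrix_vector_mult invertible_det_nz nondegenerate)
  ultimately show ?thesis using u by (metis injD)
qed

lemma fixes_trace_dual_power:
  assumes nondegenerate: "det (trace_pairing_matrix t) \<noteq> 0"
  shows "K *v trace_dual_power t s = trace_dual_power t s"
proof -
  obtain B where "trace_pairing_matrix t ** B = mat 1"
    using nondegenerate invertible_right_inverse invertible_det_nz by blast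
  then have u: "trace_pairing_matrix t *v (B *v trace_vec t) = trace_vec t"
    by (simp add: matrix_vector_mul_assoc)
  have fixed: "K *v trace_dual t = trace_dual t"
    by (simp add: trace_dual_eq[OF u] vector_scalar_commute fixes_trace_pairing_solution[OF u nondegenerate])
  show ?thesis
  proof (induction s)
    case 0
    show ?case by (simp add: fixed)
  next
    case (Suc s)
    have "K *v (mult_matrix t (trace_dual t) *v trace_dual_power t s)
        = mult_matrix t (trace_dual t) *v (K *v trace_dual_power t s)"
      by (simp add: matrix_vector_mul_assoc mult_matrix_comm fixed)
    with Suc show ?case by simp
  qed
qed

lemma eq_id_if_genericity_poly:
  assumes "genericity_poly pos t \<noteq> 0"
  shows "K = mat 1"
proof -
  from assms have nondegenerate: "det (trace_pairing_matrix t) \<noteq> 0"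
    and spanning: "det (power_matrix pos t) \<noteq> 0"
    by (auto simp: genericity_poly_def)
  have "K ** power_matrix pos t = power_matrix pos t"
    using fixes_trace_dual_power[OF nondegenerate]
    by (simp add: power_matrix_def vec_eq_iff matrix_matrix_mult_def matrix_vector_mult_def)
  moreover obtain C where "power_matrix pos t ** C = mat 1"
    using spanning invertible_right_inverse invertible_det_nz by blast
  ultimately show ?thesis
    by (metis matrix_mul_assoc matrix_mul_rid)
qed

end

section \<open>Projective stabilizers act by algebra automorphisms\<close>

lemma sum_mult_sum_swap:
  "(\<Sum>q\<in>A. (c q :: 'k::comm_semiring_0) * (\<Sum>a\<in>B. d a * Z a q)) = (\<Sum>a\<in>B. d a * (\<Sum>q\<in>A. c q * Z a q))"
proof -
  have "(\<Sum>q\<in>A. c q * (\<Sum>a\<in>B. d a * Z a q)) = (\<Sum>q\<in>A. \<Sum>a\<in>B. d a * (c q * Z a q))"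
    by (simp add: sum_distrib_left mult_ac)
  also have "\<dots> = (\<Sum>a\<in>B. d a * (\<Sum>q\<in>A. c q * Z a q))"
    by (subst sum.swap) (simp add: sum_distrib_left)
  finally show ?thesis .
qed

lemma sum_swap3:
  "(\<Sum>a\<in>A. \<Sum>b\<in>B. \<Sum>c\<in>C. F a b c) = (\<Sum>c\<in>C. \<Sum>b\<in>B. \<Sum>a\<in>A. (F a b c :: 'k::comm_monoid_add))"
proof -
  have "(\<Sum>a\<in>A. \<Sum>b\<in>B. \<Sum>c\<in>C. F a b c) = (\<Sum>a\<in>A. \<Sum>c\<in>C. \<Sum>b\<in>B. F a b c)"
    by (rule sum.cong[OF refl], rule sum.swap)
  also have "\<dots> = (\<Sum>c\<in>C. \<Sum>a\<in>A. \<Sum>b\<in>B. F a b c)" by (rule sum.swap)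
  also have "\<dots> = (\<Sum>c\<in>C. \<Sum>b\<in>B. \<Sum>a\<in>A. F a b c)"
    by (rule sum.cong[OF refl], rule sum.swap)
  finally show ?thesis .
qed

lemma sum_mat_mul_cancel:
  fixes g h :: "('n::finite, 'k::field) mat"
  assumes "mat_mul h g = id_mat"
  shows "(\<Sum>a\<in>UNIV. g a i * (\<Sum>b\<in>UNIV. h b a * X b)) = X i"
proof -
  have "(\<Sum>a\<in>UNIV. g a i * (\<Sum>b\<in>UNIV. h b a * X b)) = (\<Sum>a\<in>UNIV. \<Sum>b\<in>UNIV. X b * (h b a * g a i))"
    by (simp add: sum_distrib_left mult_ac)
  also have "\<dots> = (\<Sum>b\<in>UNIV. X b * mat_mul h g b i)"
    by (subst sum.swap) (simp add: mat_mul_def sum_distrib_left)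
  also have "\<dots> = X i"
    by (simp add: assms id_mat_def mult_delta_right)
  finally show ?thesis .
qed

lemma act_eq_nested_sum:
  "act g t i j l = (\<Sum>a\<in>UNIV. mat_inv g a i * (\<Sum>b\<in>UNIV. mat_inv g b j *
     (\<Sum>m\<in>UNIV. t a b m * g l m)))"
  by (simp add: act_def Let_def sum_distrib_left mult_ac)

lemma act_contract_covariant:
  fixes g :: "('n::finite, 'k::field) mat"
  assumes "mat_mul (mat_inv g) g = id_mat"
  shows "(\<Sum>a\<in>UNIV. g a i * (\<Sum>b\<in>UNIV. g b j * act g t a b l)) = (\<Sum>m\<in>UNIV. t i j m * g l m)"
proof -
  define Y where "Y a' b' = (\<Sum>m\<in>UNIV. t a' b' m * g l m)" for a' b'
  have "(\<Sum>a\<in>UNIV. g a i * (\<Sum>b\<in>UNIV. g b j * act g t a b l))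
     = (\<Sum>a\<in>UNIV. g a i * (\<Sum>b\<in>UNIV. g b j * (\<Sum>a'\<in>UNIV. mat_inv g a' a *
          (\<Sum>b'\<in>UNIV. mat_inv g b' b * Y a' b'))))"
    by (simp add: act_eq_nested_sum Y_def)
  also have "\<dots> = (\<Sum>a\<in>UNIV. g a i * (\<Sum>a'\<in>UNIV. mat_inv g a' a *
          (\<Sum>b\<in>UNIV. g b j * (\<Sum>b'\<in>UNIV. mat_inv g b' b * Y a' b'))))"
    by (rule sum.cong[OF refl], rule arg_cong[where f = "(*) _"], rule sum_mult_sum_swap)
  also have "\<dots> = Y i j"
    by (simp add: sum_mat_mul_cancel[OF assms])
  finally show ?thesis by (simp add: Y_def)
qed

lemma stabilizer_automorphism:
  fixes g :: "('n::finite, 'k::field) mat"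
  assumes inv: "mat_mul (mat_inv g) g = id_mat"
    and act: "act g t = (\<lambda>i j l. c * t i j l)"
  defines "K \<equiv> \<chi> i j. c * g i j"
  shows "K ** mult_matrix t x = mult_matrix t (K *v x) ** K"
proof -
  have contract: "(\<Sum>a\<in>UNIV. g a i * (\<Sum>b\<in>UNIV. g b j * (c * t a b l))) = (\<Sum>m\<in>UNIV. t i j m * g l m)"
    for i j l
    using act_contract_covariant[OF inv, of i j t l] by (simp add: act)
  show ?thesis
  proof (intro vec_eq_iff[THEN iffD2] allI)
    fix l j
    have "(mult_matrix t (K *v x) ** K) $ l $ j
        = (\<Sum>b\<in>UNIV. \<Sum>a\<in>UNIV. \<Sum>i\<in>UNIV. x$i * c * (g a i * (g b j * (c * t a b l))))"
      unfolding K_def mult_matrix_def matrix_matrix_mult_def matrix_vector_mult_def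
      by (simp add: sum_distrib_left sum_distrib_right) (simp add: mult_ac)
    also have "\<dots> = (\<Sum>i\<in>UNIV. \<Sum>a\<in>UNIV. \<Sum>b\<in>UNIV. x$i * c * (g a i * (g b j * (c * t a b l))))"
      by (rule sum_swap3)
    also have "\<dots> = (\<Sum>i\<in>UNIV. x$i * c * (\<Sum>a\<in>UNIV. g a i * (\<Sum>b\<in>UNIV. g b j * (c * t a b l))))"
      by (simp add: sum_distrib_left)
    also have "\<dots> = (\<Sum>i\<in>UNIV. x$i * c * (\<Sum>m\<in>UNIV. t i j m * g l m))"
      by (simp only: contract)
    also have "\<dots> = (\<Sum>i\<in>UNIV. \<Sum>m\<in>UNIV. c * g l m * (x$i * t i j m))"
      by (simp add: sum_distrib_left mult_ac)
    also have "\<dots> = (\<Sum>m\<in>UNIV. \<Sum>i\<in>UNIV. c * g l m * (x$i * t i j m))"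
      by (rule sum.swap)
    also have "\<dots> = (K ** mult_matrix t x) $ l $ j"
      by (simp add: K_def mult_matrix_def matrix_matrix_mult_def sum_distrib_left)
    finally show "(K ** mult_matrix t x) $ l $ j = (mult_matrix t (K *v x) ** K) $ l $ j"
      by (rule sym)
  qed
qed

lemma proj_stabilizer_eq_center_GL:
  assumes generic: "genericity_poly pos t \<noteq> 0"
  shows "proj_stabilizer t = (center_GL :: ('n::finite, 'k::field) mat set)"
proof
  show "center_GL \<subseteq> proj_stabilizer t"
  proof
    fix g :: "('n, 'k) mat" assume "g \<in> center_GL"
    then obtain c where "c \<noteq> 0" and "g = scalar_mat c" by (auto simp: center_GL_eq)
    then show "g \<in> proj_stabilizer t"
      by (auto simp: proj_stabilizer_def scalar_mat_GL act_scalar_mat intro!: exI[of _ "inverse c"])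
  qed
next
  show "proj_stabilizer t \<subseteq> center_GL"
  proof
    fix g :: "('n, 'k) mat" assume "g \<in> proj_stabilizer t"
    then obtain c where "g \<in> GL" and c: "c \<noteq> 0" and act: "act g t = (\<lambda>i j l. c * t i j l)"
      by (auto simp: proj_stabilizer_def)
    define K where "K = (\<chi> i j. c * g i j)"
    define H where "H = (\<chi> i j. inverse c * mat_inv g i j)"
    have cancel: "c * x * (inverse c * y) = x * y" "inverse c * x * (c * y) = x * y" for x y
      using c by (simp_all add: field_simps)
    have "K ** H = matrix_of (mat_mul g (mat_inv g))" "H ** K = matrix_of (mat_mul (mat_inv g) g)"
      by (simp_all add: K_def H_def matrix_of_def mat_mul_def matrix_matrix_mult_def cancel)
    then interpret algebra_automorphism t K H
      using stabilizer_automorphism[OF mat_inv_GL(2)[OF \<open>g \<in> GL\<close>] act]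
      by unfold_locales (simp_all add: K_def mat_inv_GL[OF \<open>g \<in> GL\<close>] matrix_of_id_mat)
    have "K = mat 1" by (rule eq_id_if_genericity_poly[OF generic])
    then have scaled: "c * g i j = (if i = j then 1 else 0)" for i j
      by (simp add: K_def vec_eq_iff mat_def)
    have "g i j = scalar_mat (inverse c) i j" for i j
    proof -
      have "g i j = inverse c * (c * g i j)" using c by simp
      then show ?thesis by (simp add: scaled scalar_mat_def)
    qed
    then have "g = scalar_mat (inverse c)" by blast
    then show "g \<in> center_GL" using c by (auto simp: center_GL_eq)
  qed
qed

lemma act_scale: "act g (\<lambda>i j l. c * t i j l) = (\<lambda>i j l. c * act g t i j l)"
  by (simp add: act_def Let_def sum_distrib_left mult_ac)

lemma proj_stabilizer_scale:
  assumes "(c::'k::field) \<noteq> 0"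
  shows "proj_stabilizer (\<lambda>i j l. c * t i j l) = proj_stabilizer (t :: ('n::finite, 'k) tensor)"
proof -
  have "act g t = (\<lambda>i j l. d * t i j l) \<longleftrightarrow>
        act g (\<lambda>i j l. c * t i j l) = (\<lambda>i j l. d * (c * t i j l))" for g d
    using assms by (auto simp: act_scale fun_eq_iff algebra_simps)
  then show ?thesis by (simp add: proj_stabilizer_def)
qed

section \<open>Polynomial functions and dense open cones\<close>

lemma poly_fun_sum:
  "finite A \<Longrightarrow> (\<And>a. a \<in> A \<Longrightarrow> poly_fun (F a)) \<Longrightarrow> poly_fun (\<lambda>t. \<Sum>a\<in>A. F a t)"
  by (induction A rule: finite_induct) (auto intro: poly_fun.intros)

lemma poly_fun_prod:
  "finite A \<Longrightarrow> (\<And>a. a \<in> A \<Longrightarrow> poly_fun (F a)) \<Longrightarrow> poly_fun (\<lambda>t. \<Prod>a\<in>A. F a t)"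
  by (induction A rule: finite_induct) (auto intro: poly_fun.intros)

lemma poly_fun_det:
  fixes M :: "('n, 'k::field) tensor \<Rightarrow> 'k^'m::finite^'m"
  assumes "\<And>i j. poly_fun (\<lambda>t. M t $ i $ j)"
  shows "poly_fun (\<lambda>t. det (M t))"
  unfolding det_def by (auto intro!: poly_fun_sum poly_fun_prod poly_fun.intros assms)

lemma poly_fun_scale: "poly_fun f \<Longrightarrow> poly_fun (\<lambda>t. f (\<lambda>i j l. c * t i j l))"
  by (induction rule: poly_fun.induct) (auto intro: poly_fun.intros)

lemma poly_fun_restrict_line:
  "poly_fun f \<Longrightarrow> \<exists>p. \<forall>s. f (\<lambda>i j l. A i j l + s * B i j l) = poly p s"
proof (induction rule: poly_fun.induct)
  case (const a)
  show ?case by (intro exI[of _ "[:a:]"]) simp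
next
  case (coord i j l)
  show ?case by (intro exI[of _ "[:A i j l, B i j l:]"]) (simp add: mult.commute)
next
  case (add f g)
  then obtain p q where "\<forall>s. f (\<lambda>i j l. A i j l + s * B i j l) = poly p s"
    and "\<forall>s. g (\<lambda>i j l. A i j l + s * B i j l) = poly q s" by blast
  then show ?case by (intro exI[of _ "p + q"]) simp
next
  case (mult f g)
  then obtain p q where "\<forall>s. f (\<lambda>i j l. A i j l + s * B i j l) = poly p s"
    and "\<forall>s. g (\<lambda>i j l. A i j l + s * B i j l) = poly q s" by blast
  then show ?case by (intro exI[of _ "p * q"]) simp
qed

lemma poly_fun_genericity_poly: "poly_fun (genericity_poly pos :: ('n::finite, 'k::field) tensor \<Rightarrow> 'k)"
proof -
  have trace_vec: "poly_fun (\<lambda>t::('n, 'k) tensor. trace_vec t $ i)" for i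
    unfolding trace_vec_def by (auto intro: poly_fun_sum poly_fun.intros)
  have pairing: "poly_fun (\<lambda>t::('n, 'k) tensor. trace_pairing_matrix t $ i $ j)" for i j
    unfolding trace_pairing_matrix_def vec_lambda_beta
    by (intro poly_fun_sum poly_fun.mult poly_fun.coord trace_vec) simp
  have dual: "poly_fun (\<lambda>t::('n, 'k) tensor. trace_dual t $ k)" for k
    unfolding trace_dual_def vec_lambda_beta
  proof (rule poly_fun_det)
    show "poly_fun (\<lambda>t::('n, 'k) tensor.
        (\<chi> i j. if j = k then trace_vec t $ i else trace_pairing_matrix t $ i $ j) $ i $ j)" for i j
      using trace_vec[of i] pairing[of i j] by (cases "j = k") simp_all
  qed
  have power: "poly_fun (\<lambda>t::('n, 'k) tensor. trace_dual_power t s $ k)" for s k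
  proof (induction s arbitrary: k)
    case 0
    show ?case by (simp add: dual)
  next
    case (Suc s)
    then show ?case
      by (auto simp: mult_matrix_def matrix_vector_mult_def intro!: poly_fun_sum poly_fun.intros dual)
  qed
  show ?thesis
    unfolding genericity_poly_def
    by (auto intro!: poly_fun.mult poly_fun_det simp: pairing power_matrix_def power)
qed

definition nonvanishing_cone :: "(('n, 'k::field) tensor \<Rightarrow> 'k) \<Rightarrow> ('n, 'k) tensor set" where
  "nonvanishing_cone f = {t \<in> symC - {\<lambda>i j l. 0}. \<exists>c. c \<noteq> 0 \<and> f (\<lambda>i j l. c * t i j l) \<noteq> 0}"

lemma proj_open_nonvanishing_cone:
  fixes f :: "('n, 'k::field) tensor \<Rightarrow> 'k"
  assumes "poly_fun f"
  shows "proj_open (nonvanishing_cone f)"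
  unfolding proj_open_def proj_cone_def
proof (intro conjI ballI allI impI)
  show "nonvanishing_cone f \<subseteq> symC - {\<lambda>i j l. 0}"
    by (auto simp: nonvanishing_cone_def)
next
  fix t and d :: 'k assume "t \<in> nonvanishing_cone f" and "d \<noteq> 0"
  then obtain c where "t \<in> symC" "t \<noteq> (\<lambda>i j l. 0)" "c \<noteq> 0" "f (\<lambda>i j l. c * t i j l) \<noteq> 0"
    by (auto simp: nonvanishing_cone_def)
  with \<open>d \<noteq> 0\<close> show "(\<lambda>i j l. d * t i j l) \<in> nonvanishing_cone f"
    unfolding nonvanishing_cone_def
    by (auto simp: symC_def fun_eq_iff intro!: exI[of _ "c / d"])
next
  let ?S = "{\<lambda>t. f (\<lambda>i j l. c * t i j l) | c. c \<noteq> 0}"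
  have "\<forall>g\<in>?S. poly_fun g" using poly_fun_scale[OF assms] by blast
  moreover have "nonvanishing_cone f = {t \<in> symC - {\<lambda>i j l. 0}. \<exists>g\<in>?S. g t \<noteq> 0}"
    by (auto simp: nonvanishing_cone_def)
  ultimately show "\<exists>S. (\<forall>g\<in>S. poly_fun g) \<and>
      nonvanishing_cone f = {t \<in> symC - {\<lambda>i j l. 0}. \<exists>g\<in>S. g t \<noteq> 0}"
    by blast
qed

text \<open>A nonempty open set and the cone meet on the line through a point of each: the three
  polynomials in the line parameter that must not vanish are nonzero, and an infinite field
  contains a point outside their finitely many roots.\<close>
lemma proj_dense_nonvanishing_cone:
  fixes f :: "('n, 'k::field) tensor \<Rightarrow> 'k"
  assumes infinite: "infinite (UNIV :: 'k set)"
    and f: "poly_fun f" and t0: "t0 \<in> symC" "f t0 \<noteq> 0"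
  shows "proj_dense (nonvanishing_cone f)"
  unfolding proj_dense_def
proof (intro allI impI)
  fix U :: "('n, 'k) tensor set" assume "proj_open U \<and> U \<noteq> {}"
  then obtain S where S: "\<forall>g\<in>S. poly_fun g"
    and U: "U = {t \<in> symC - {\<lambda>i j l. 0}. \<exists>g\<in>S. g t \<noteq> 0}" and "U \<noteq> {}"
    unfolding proj_open_def by blast
  then obtain t1 g i0 j0 l0 where t1: "t1 \<in> symC" "t1 i0 j0 l0 \<noteq> 0" and g: "g \<in> S" "g t1 \<noteq> 0"
    by (auto simp: fun_eq_iff)
  define T where "T s = (\<lambda>i j l. t1 i j l + s * (t0 i j l - t1 i j l))" for s
  obtain p1 where p1: "\<forall>s. g (T s) = poly p1 s"
    using poly_fun_restrict_line[of g t1 "\<lambda>i j l. t0 i j l - t1 i j l"] S g unfolding T_def by blast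
  obtain p2 where p2: "\<forall>s. f (T s) = poly p2 s"
    using poly_fun_restrict_line[OF f, of t1 "\<lambda>i j l. t0 i j l - t1 i j l"] unfolding T_def by blast
  obtain p3 where p3: "\<forall>s. T s i0 j0 l0 = poly p3 s"
    using poly_fun_restrict_line[OF poly_fun.coord[of i0 j0 l0], of t1 "\<lambda>i j l. t0 i j l - t1 i j l"]
    unfolding T_def by blast
  have "T 0 = t1" "T 1 = t0" by (simp_all add: T_def)
  then have "p1 \<noteq> 0" "p2 \<noteq> 0" "p3 \<noteq> 0"
    using p1 p2 p3 g t1 t0 by (metis poly_0)+
  then have "finite {s. poly (p1 * p2 * p3) s = 0}" by (simp add: poly_roots_finite)
  then obtain s where "poly (p1 * p2 * p3) s \<noteq> 0"
    using ex_new_if_finite[OF infinite] by blast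
  then have nonzero: "g (T s) \<noteq> 0" "f (T s) \<noteq> 0" "T s i0 j0 l0 \<noteq> 0"
    using p1 p2 p3 by auto
  have "T s \<in> symC" using t1 t0 by (simp add: symC_def T_def)
  then have "T s \<in> U \<inter> nonvanishing_cone f"
    using nonzero g unfolding U nonvanishing_cone_def by (force intro!: exI[of _ 1])
  then show "nonvanishing_cone f \<inter> U \<noteq> {}" by blast
qed

lemma algebraically_closed_infinite:
  assumes "algebraically_closed TYPE('k::field)"
  shows "infinite (UNIV :: 'k set)"
proof
  assume finite: "finite (UNIV :: 'k set)"
  define q :: "'k poly" where "q = 1 + (\<Prod>a\<in>(UNIV :: 'k set). [:-a, 1:])"
  have "degree (\<Prod>a\<in>(UNIV :: 'k set). [:-a, 1:]) = card (UNIV :: 'k set)"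
    by (subst degree_prod_eq_sum_degree) auto
  moreover have "card (UNIV :: 'k set) > 0" using finite by (simp add: card_gt_0_iff)
  ultimately have "degree q > 0"
    unfolding q_def by (subst degree_add_eq_right) auto
  then obtain x where "poly q x = 0"
    using assms unfolding algebraically_closed_def by blast
  moreover have "poly (\<Prod>a\<in>(UNIV :: 'k set). [:-a, 1:]) x = 0"
    using finite by (auto simp: poly_prod prod_zero_iff)
  ultimately show False by (simp add: q_def)
qed

section \<open>A tensor with trivial projective stabilizer\<close>

lemma mult_matrix_axis:
  "(mult_matrix t (a *s axis p 1) *v (b *s axis q 1)) $ l = a * b * t p q l"
  by (simp add: mult_matrix_def matrix_vector_mult_def axis_def mult_delta_left mult_delta_right)

locale enumeration =
  fixes pos :: "'n::finite \<Rightarrow> nat"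
  assumes bij: "bij_betw pos UNIV {..<CARD('n)}"
begin

definition elem :: "nat \<Rightarrow> 'n" where
  "elem k = inv_into UNIV pos k"

lemma pos_less_card: "pos x < CARD('n)"
  using bij by (auto simp: bij_betw_def)

lemma pos_eq_pos_iff: "pos x = pos y \<longleftrightarrow> x = y"
  using bij by (auto simp: bij_betw_def inj_on_def)

lemma elem_pos: "elem (pos x) = x"
  using bij by (simp add: elem_def bij_betw_def inv_into_f_f)

lemma pos_elem: "k < CARD('n) \<Longrightarrow> pos (elem k) = k"
  using bij unfolding elem_def bij_betw_def by (simp add: f_inv_into_f)

lemma pos_eq_iff: "k < CARD('n) \<Longrightarrow> pos l = k \<longleftrightarrow> l = elem k"
  using pos_elem elem_pos by metis

lemma card_pos_eq: "k < CARD('n) \<Longrightarrow> card {l. pos l = k} = 1"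
  by (simp add: pos_eq_iff)

text \<open>Writing \<open>e\<^sub>k\<close> for the basis vector \<open>elem k\<close>, the algebra with this structure
  tensor has \<open>e\<^sub>0 e\<^sub>k = e\<^sub>k\<^sub>+\<^sub>1\<close> for \<open>k < n - 1\<close>, \<open>e\<^sub>0 e\<^sub>n\<^sub>-\<^sub>1 = e\<^sub>n\<^sub>-\<^sub>1\<close>,
  \<open>e\<^sub>i e\<^sub>i = e\<^sub>i + e\<^sub>0\<close> and \<open>e\<^sub>i e\<^sub>j = e\<^sub>0\<close> for distinct \<open>i, j > 0\<close>. Left multiplication
  by any \<open>e\<^sub>i\<close> has trace \<open>1\<close>, so \<open>e\<^sub>0\<close> represents the trace form through the trace
  pairing, and the powers of \<open>e\<^sub>0\<close> are the basis.\<close>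
definition witness :: "('n, 'k::field) tensor" where
  "witness i j l =
    (if pos i = 0 then (if pos j < CARD('n) - 1 then of_bool (pos l = Suc (pos j)) else of_bool (l = j))
     else if pos j = 0 then (if pos i < CARD('n) - 1 then of_bool (pos l = Suc (pos i)) else of_bool (l = i))
     else if i = j then of_bool (l = i) + of_bool (pos l = 0) else of_bool (pos l = 0))"

lemma witness_symC: "witness \<in> symC"
  by (auto simp: symC_def witness_def pos_eq_pos_iff[symmetric])

lemma trace_vec_witness: "trace_vec (witness :: ('n, 'k::field) tensor) = (\<chi> i. 1)"
proof -
  have "(\<Sum>a\<in>UNIV. witness i a a :: 'k) = 1" for i
  proof (cases "pos i = 0")
    case True
    then have "witness i a a = (of_bool (a = elem (CARD('n) - 1)) :: 'k)" for a
      using pos_less_card[of a] pos_eq_iff[of "CARD('n) - 1" a] by (auto simp: witness_def)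
    then show ?thesis by (simp add: of_bool_def)
  next
    case False
    then have "witness i a a = (of_bool (a = i) :: 'k)" for a
      by (auto simp: witness_def)
    then show ?thesis by (simp add: of_bool_def)
  qed
  then show ?thesis by (simp add: trace_vec_def vec_eq_iff)
qed

lemma sum_witness: "(\<Sum>l\<in>UNIV. witness i j l :: 'k::field) = 1 + of_bool (i = j \<and> pos i \<noteq> 0)"
proof -
  have next_pos: "Suc k < CARD('n)" if "k < CARD('n) - 1" for k using that by simp
  consider "pos i = 0" | "pos i \<noteq> 0" "pos j = 0" | "pos i \<noteq> 0" "pos j \<noteq> 0"
    by blast
  then show ?thesis
  proof cases
    case 1
    then show ?thesis
      by (cases "pos j < CARD('n) - 1")
        (simp_all add: witness_def card_pos_eq next_pos)
  next
    case 2
    then have "i \<noteq> j" by auto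
    with 2 show ?thesis
      by (cases "pos i < CARD('n) - 1")
        (simp_all add: witness_def card_pos_eq next_pos)
  next
    case 3
    then show ?thesis
      by (cases "i = j") (simp_all add: witness_def sum.distrib card_pos_eq)
  qed
qed

lemma trace_pairing_matrix_witness:
  "trace_pairing_matrix (witness :: ('n, 'k::field) tensor) $ i $ j = 1 + of_bool (i = j \<and> pos i \<noteq> 0)"
  by (simp add: trace_pairing_matrix_def trace_vec_witness sum_witness)

lemma trace_pairing_matrix_witness_kernel:
  assumes "trace_pairing_matrix (witness :: ('n, 'k::field) tensor) *v x = 0"
  shows "x = 0"
proof -
  define S where "S = (\<Sum>j\<in>UNIV. x $ j)"
  have row: "(trace_pairing_matrix (witness :: ('n, 'k) tensor) *v x) $ i
      = S + of_bool (pos i \<noteq> 0) * x $ i" for i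
    by (simp add: matrix_vector_mult_def trace_pairing_matrix_witness distrib_right sum.distrib
        S_def of_bool_def mult_delta_left)
  have "S = 0" using row[of "elem 0"] assms by (simp add: pos_elem)
  have off_first: "x $ i = 0" if "i \<noteq> elem 0" for i
  proof -
    have "pos i \<noteq> 0" using that elem_pos by metis
    then show ?thesis using row[of i] assms \<open>S = 0\<close> by simp
  qed
  then have "S = x $ elem 0"
    unfolding S_def by (subst sum.remove[of _ "elem 0"]) auto
  with \<open>S = 0\<close> off_first show ?thesis by (metis vec_eq_iff zero_index)
qed

lemma det_trace_pairing_matrix_witness: "det (trace_pairing_matrix (witness :: ('n, 'k::field) tensor)) \<noteq> 0"
proof -
  let ?B = "trace_pairing_matrix (witness :: ('n, 'k) tensor)"
  have "inj ((*v) ?B)"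
  proof (rule injI)
    fix x y assume "?B *v x = ?B *v y"
    then have "?B *v (x - y) = 0" by (simp add: matrix_vector_mult_diff_distrib)
    then show "x = y" using trace_pairing_matrix_witness_kernel by force
  qed
  then show ?thesis using det_nz_iff_inj_gen[of "(*v) ?B"] by simp
qed

lemma trace_pairing_matrix_witness_solution:
  "trace_pairing_matrix (witness :: ('n, 'k::field) tensor) *v axis (elem 0) 1 = trace_vec witness"
  by (simp add: vec_eq_iff matrix_vector_mult_def axis_def mult_delta_right
      trace_pairing_matrix_witness trace_vec_witness pos_elem)

lemma trace_dual_power_witness:
  defines "d \<equiv> det (trace_pairing_matrix (witness :: ('n, 'k::field) tensor))"
  assumes "s < CARD('n)"
  shows "trace_dual_power (witness :: ('n, 'k) tensor) s = d ^ Suc s *s axis (elem s) 1"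
  using assms(2)
proof (induction s)
  case 0
  show ?case by (simp add: d_def trace_dual_eq[OF trace_pairing_matrix_witness_solution])
next
  case (Suc s)
  then have s: "s < CARD('n) - 1" "Suc s < CARD('n)" by auto
  have "trace_dual_power witness (Suc s) $ l = d * d ^ Suc s * witness (elem 0) (elem s) l" for l
    using Suc.IH s
    by (simp add: d_def trace_dual_eq[OF trace_pairing_matrix_witness_solution] mult_matrix_axis)
  moreover have "witness (elem 0) (elem s) l = (of_bool (l = elem (Suc s)) :: 'k)" for l
    using s pos_elem[of 0] pos_elem[of s] pos_eq_iff[OF s(2), of l] by (simp add: witness_def)
  ultimately show ?case by (simp add: vec_eq_iff axis_def)
qed

lemma genericity_poly_witness: "genericity_poly pos (witness :: ('n, 'k::field) tensor) \<noteq> 0"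
proof -
  let ?d = "det (trace_pairing_matrix (witness :: ('n, 'k) tensor))"
  have "power_matrix pos (witness :: ('n, 'k) tensor) $ l $ j = (if l = j then ?d ^ Suc (pos j) else 0)"
    for l j
    by (simp add: power_matrix_def trace_dual_power_witness[OF pos_less_card] elem_pos axis_def)
  then have "det (power_matrix pos (witness :: ('n, 'k) tensor)) = (\<Prod>j\<in>UNIV. ?d ^ Suc (pos j))"
    by (subst det_diagonal) simp_all
  then show ?thesis
    using det_trace_pairing_matrix_witness by (auto simp: genericity_poly_def)
qed

end

theorem theorem6:
  assumes "algebraically_closed TYPE('k::field)"
    and "(2::'k) \<noteq> 0"
  shows "\<exists>W :: ('n::finite, 'k) tensor set.
           proj_open W \<and> proj_dense W \<and>
           (\<forall>t\<in>W. proj_stabilizer t = (center_GL :: ('n, 'k) mat set))"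
proof -
  obtain pos :: "'n \<Rightarrow> nat" where "bij_betw pos UNIV {..<CARD('n)}"
    using ex_bij_betw_finite_nat[of "UNIV :: 'n set"] by (auto simp: atLeast0LessThan)
  then interpret enumeration pos by unfold_locales
  let ?W = "nonvanishing_cone (genericity_poly pos) :: ('n, 'k) tensor set"
  have "proj_open ?W"
    by (rule proj_open_nonvanishing_cone[OF poly_fun_genericity_poly])
  moreover have "proj_dense ?W"
    by (rule proj_dense_nonvanishing_cone[OF algebraically_closed_infinite[OF assms(1)]
          poly_fun_genericity_poly witness_symC genericity_poly_witness])
  moreover have "proj_stabilizer t = center_GL" if "t \<in> ?W" for t
  proof -
    from that obtain c where "c \<noteq> 0" and "genericity_poly pos (\<lambda>i j l. c * t i j l) \<noteq> 0"
      by (auto simp: nonvanishing_cone_def)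
    then show ?thesis by (metis proj_stabilizer_scale proj_stabilizer_eq_center_GL)
  qed
  ultimately show ?thesis by blast
qed

end
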